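(* Let $X$, $Y$, $Z$ be topological spaces with $Z$ regular, and let $S$ denote $S(X\times Y,Z)$ with the cross-open topology. Define $e:X\times Y\times S\to Z$, $e_1:(X\times S)\times Y\to Z$ and $e_2:X\times(Y\times S)\to Z$ by $e(x,y,s)=e_1((x,s),y)=e_2(x,(y,s))=s(x,y)$. Then: (1) $e$ (as a function of three variables), $e_1$ and $e_2$ (as functions of two variables) are separately continuous; (2) if moreover $X$ and $Y$ are completely regular spaces without isolated points and $Z$ is a Hausdorff topological vector space with more than one point, then $e$, $e_1$ and $e_2$ are discontinuous at every point of their domains.
   Context: For topological spaces $X,Y,Z$, a function $f:X\times Y\to Z$ is separately continuous if $y\mapsto f(x,y)$ is continuous for every $x\in X$ and $x\mapsto f(x,y)$ is continuous for every $y\in Y$; a function of three variables is separately continuous if it is continuous in each variable when the other two are fixed. $S(X\times Y,Z)$ denotes the set of all separately continuous functions $X\times Y\to Z$. For $p=(a,b)\in X\times Y$, the cross of $p$ is $\mathrm{cr}\{p\}=(\{a\}\times Y)\cup(X\times\{b\})$. The cross-open topology on $S(X\times Y,Z)$ is the topology generated by the subbase consisting of the sets $\{s\in S(X\times Y,Z): s(A)\subseteq W\}$, where $W$ is open in $Z$ and $A=\overline{G}\cap C$ for some $p\in X\times Y$, $C=\mathrm{cr}\{p\}$, and $G$ an open subset of $C$ (in the subspace topology of $C$; $\overline{G}$ is the closure in $X\times Y$). *)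

theory Defs
  imports "HOL-Analysis.Analysis"
begin

definition sep_cont2 :: "'a topology \<Rightarrow> 'b topology \<Rightarrow> 'c topology \<Rightarrow> ('a \<times> 'b \<Rightarrow> 'c) \<Rightarrow> bool" where
  "sep_cont2 A B Z f \<longleftrightarrow>
     (\<forall>x\<in>topspace A. continuous_map B Z (\<lambda>y. f (x, y))) \<and>
     (\<forall>y\<in>topspace B. continuous_map A Z (\<lambda>x. f (x, y)))"

definition sep_cont3 :: "'a topology \<Rightarrow> 'b topology \<Rightarrow> 'd topology \<Rightarrow> 'c topology
      \<Rightarrow> ('a \<Rightarrow> 'b \<Rightarrow> 'd \<Rightarrow> 'c) \<Rightarrow> bool" where
  "sep_cont3 A B C Z f \<longleftrightarrow>
     (\<forall>y\<in>topspace B. \<forall>w\<in>topspace C. continuous_map A Z (\<lambda>x. f x y w)) \<and>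
     (\<forall>x\<in>topspace A. \<forall>w\<in>topspace C. continuous_map B Z (\<lambda>y. f x y w)) \<and>
     (\<forall>x\<in>topspace A. \<forall>y\<in>topspace B. continuous_map C Z (\<lambda>w. f x y w))"

text \<open>S(X \<times> Y, Z): separately continuous functions on topspace X \<times> topspace Y
  (made unique by requiring them to be extensional, i.e. undefined outside).\<close>
definition SC :: "'a topology \<Rightarrow> 'b topology \<Rightarrow> 'c topology \<Rightarrow> ('a \<times> 'b \<Rightarrow> 'c) set" where
  "SC X Y Z = {s. s \<in> extensional (topspace X \<times> topspace Y) \<and> sep_cont2 X Y Z s}"

definition cross :: "'a topology \<Rightarrow> 'b topology \<Rightarrow> 'a \<times> 'b \<Rightarrow> ('a \<times> 'b) set" where
  "cross X Y p = ({fst p} \<times> topspace Y) \<union> (topspace X \<times> {snd p})"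

text \<open>The cross-open topology on S(X \<times> Y, Z), generated by the subbase of the sets
  {s. s(A) \<subseteq> W}, W open in Z, A = closure(G) \<inter> C, C = cross of p, G open in C.
  (The whole carrier is added to the subbase so that the topspace is exactly SC X Y Z.)\<close>
definition cross_open_topology :: "'a topology \<Rightarrow> 'b topology \<Rightarrow> 'c topology
      \<Rightarrow> ('a \<times> 'b \<Rightarrow> 'c) topology" where
  "cross_open_topology X Y Z = topology_generated_by
     (insert (SC X Y Z)
       {{s \<in> SC X Y Z. s ` A \<subseteq> W} | W A. openin Z W \<and>
          (\<exists>p \<in> topspace X \<times> topspace Y. \<exists>G.
              openin (subtopology (prod_topology X Y) (cross X Y p)) G \<and>
              A = (prod_topology X Y closure_of G) \<inter> cross X Y p)})"

definition continuous_at_pt :: "'a topology \<Rightarrow> 'b topology \<Rightarrow> ('a \<Rightarrow> 'b) \<Rightarrow> 'a \<Rightarrow> bool" where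
  "continuous_at_pt T U f p \<longleftrightarrow> p \<in> topspace T \<and> f p \<in> topspace U \<and>
     (\<forall>V. openin U V \<and> f p \<in> V \<longrightarrow>
        (\<exists>N. openin T N \<and> p \<in> N \<and> (\<forall>q\<in>N. f q \<in> V)))"

definition no_isolated_points :: "'a topology \<Rightarrow> bool" where
  "no_isolated_points X \<longleftrightarrow> (\<forall>x\<in>topspace X. \<not> openin X {x})"

definition real_tvs :: "'c topology \<Rightarrow> ('c \<Rightarrow> 'c \<Rightarrow> 'c) \<Rightarrow> (real \<Rightarrow> 'c \<Rightarrow> 'c) \<Rightarrow> 'c \<Rightarrow> bool" where
  "real_tvs Z add smul zero \<longleftrightarrow>
     (let V = topspace Z in
      zero \<in> V \<and>
      (\<forall>u\<in>V. \<forall>v\<in>V. add u v \<in> V) \<and>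
      (\<forall>a. \<forall>v\<in>V. smul a v \<in> V) \<and>
      (\<forall>u\<in>V. \<forall>v\<in>V. \<forall>w\<in>V. add (add u v) w = add u (add v w)) \<and>
      (\<forall>u\<in>V. \<forall>v\<in>V. add u v = add v u) \<and>
      (\<forall>v\<in>V. add zero v = v) \<and>
      (\<forall>v\<in>V. \<exists>w\<in>V. add v w = zero) \<and>
      (\<forall>a b. \<forall>v\<in>V. smul a (smul b v) = smul (a * b) v) \<and>
      (\<forall>v\<in>V. smul 1 v = v) \<and>
      (\<forall>a. \<forall>u\<in>V. \<forall>v\<in>V. smul a (add u v) = add (smul a u) (smul a v)) \<and>
      (\<forall>a b. \<forall>v\<in>V. smul (a + b) v = add (smul a v) (smul b v)) \<and>
      continuous_map (prod_topology Z Z) Z (\<lambda>(u, v). add u v) \<and>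
      continuous_map (prod_topology euclideanreal Z) Z (\<lambda>(a, v). smul a v))"

end

theory Submission
  imports Defs
begin

text \<open>Continuity of the evaluation in s, jointly with x (or with y), is the only nontrivial part
  of separate continuity. Given an open W \<ni> s(a,b), regularity of Z yields an open W' \<ni> s(a,b)
  whose closure lies in W. The preimages U, V of W' along the two arms of the cross through (a,b)
  give a relatively open subset G = (U \<times> V) \<inter> cross of the cross, and since s is continuous on
  each arm it maps the closure of G into the closure of W'. So the subbasic set
  {t. t(closure G \<inter> cross) \<subseteq> W} is a neighbourhood of s on which t(x,b), t(a,y) \<in> W for all
  x \<in> U, y \<in> V.

  For the discontinuity, note that a basic neighbourhood of s constrains its members only on
  finitely many crosses, i.e. on (F_X \<times> Y) \<union> (X \<times> F_Y) with F_X, F_Y finite. In a T1 space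
  without isolated points nonempty open sets are infinite, so every neighbourhood of (x0, y0)
  contains a point (x, y) with x \<notin> F_X, y \<notin> F_Y, and complete regularity provides Urysohn
  functions f, g vanishing at x, y and equal to 1 on F_X, F_Y. With h = (1 - f)(1 - g), the
  separately continuous function (1 - h) s + h c agrees with s on those crosses but takes an
  arbitrary value c at (x, y). Hence the evaluation maps every neighbourhood of (x0, y0, s) onto
  all of Z, whereas in a T1 space with two points every point has a proper open neighbourhood.\<close>

lemma topspace_cross_open_topology [simp]: "topspace (cross_open_topology X Y Z) = SC X Y Z"
  unfolding cross_open_topology_def by auto

lemma SC_continuous_map_snd:
  "s \<in> SC X Y Z \<Longrightarrow> x \<in> topspace X \<Longrightarrow> continuous_map Y Z (\<lambda>y. s (x, y))"
  unfolding SC_def sep_cont2_def by auto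

lemma SC_continuous_map_fst:
  "s \<in> SC X Y Z \<Longrightarrow> y \<in> topspace Y \<Longrightarrow> continuous_map X Z (\<lambda>x. s (x, y))"
  unfolding SC_def sep_cont2_def by auto

lemma SC_in_topspace:
  "s \<in> SC X Y Z \<Longrightarrow> x \<in> topspace X \<Longrightarrow> y \<in> topspace Y \<Longrightarrow> s (x, y) \<in> topspace Z"
  unfolding SC_def sep_cont2_def by (auto dest: continuous_map_image_subset_topspace)

lemma openin_cross_open_topology_subbasic:
  assumes "openin Z W" "p \<in> topspace X \<times> topspace Y"
    and "openin (subtopology (prod_topology X Y) (cross X Y p)) G"
  shows "openin (cross_open_topology X Y Z)
           {s \<in> SC X Y Z. s ` (prod_topology X Y closure_of G \<inter> cross X Y p) \<subseteq> W}"
  unfolding cross_open_topology_def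
  by (intro topology_generated_by_Basis insertI2 CollectI exI[of _ W]
      exI[of _ "prod_topology X Y closure_of G \<inter> cross X Y p"] conjI refl assms(1))
    (use assms(2,3) in blast)

lemma cross_open_neighbourhood_on_cross:
  assumes "regular_space Z" and s: "s \<in> SC X Y Z" and a: "a \<in> topspace X" and b: "b \<in> topspace Y"
    and W: "openin Z W" "s (a, b) \<in> W"
  obtains U V N where "openin X U" "a \<in> U" "openin Y V" "b \<in> V"
    "openin (cross_open_topology X Y Z) N" "s \<in> N"
    "\<forall>t\<in>N. \<forall>x\<in>U. t (x, b) \<in> W" "\<forall>t\<in>N. \<forall>y\<in>V. t (a, y) \<in> W"
proof -
  have cont_a: "continuous_map Y Z (\<lambda>y. s (a, y))" and cont_b: "continuous_map X Z (\<lambda>x. s (x, b))"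
    using SC_continuous_map_snd[OF s a] SC_continuous_map_fst[OF s b] .
  have "neighbourhood_base_of (closedin Z) Z"
    using assms(1) neighbourhood_base_of_closedin by blast
  then have "\<exists>W' C. openin Z W' \<and> closedin Z C \<and> s (a, b) \<in> W' \<and> W' \<subseteq> C \<and> C \<subseteq> W"
    using W unfolding neighbourhood_base_of by simp
  then obtain W' C where W': "openin Z W'" "s (a, b) \<in> W'" and "closedin Z C" "W' \<subseteq> C" "C \<subseteq> W"
    by blast
  then have cl_W': "Z closure_of W' \<subseteq> W"
    using closure_of_minimal by blast
  define U where "U = {x \<in> topspace X. s (x, b) \<in> W'}"
  define V where "V = {y \<in> topspace Y. s (a, y) \<in> W'}"
  have U: "openin X U" "a \<in> U"
    unfolding U_def using cont_b W' a openin_continuous_map_preimage by auto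
  have V: "openin Y V" "b \<in> V"
    unfolding V_def using cont_a W' b openin_continuous_map_preimage by auto
  define G where "G = (U \<times> V) \<inter> cross X Y (a, b)"
  define A where "A = prod_topology X Y closure_of G \<inter> cross X Y (a, b)"
  define N where "N = {t \<in> SC X Y Z. t ` A \<subseteq> W}"
  have "openin (subtopology (prod_topology X Y) (cross X Y (a, b))) G"
    unfolding G_def openin_subtopology using U V
    by (intro exI[of _ "U \<times> V"]) (simp add: openin_prod_Times_iff)
  then have N: "openin (cross_open_topology X Y Z) N"
    unfolding N_def A_def using W a b by (intro openin_cross_open_topology_subbasic) auto
  have G_cross: "G \<subseteq> cross X Y (a, b)"
    unfolding G_def by blast
  have "G \<subseteq> topspace (prod_topology X Y)"
    unfolding G_def using openin_subset[OF U(1)] openin_subset[OF V(1)] by auto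
  then have G_A: "G \<subseteq> A"
    unfolding A_def using closure_of_subset G_cross by blast
  have cl_G: "prod_topology X Y closure_of G \<subseteq> (X closure_of U) \<times> (Y closure_of V)"
    unfolding closure_of_Times[symmetric] G_def by (rule closure_of_mono) blast
  have s_N: "s \<in> N"
    unfolding N_def
  proof (intro CollectI conjI s image_subsetI)
    fix q assume "q \<in> A"
    then have q: "q \<in> (X closure_of U) \<times> (Y closure_of V)" "q \<in> cross X Y (a, b)"
      unfolding A_def using cl_G by blast+
    then consider "fst q = a" "snd q \<in> Y closure_of V" | "snd q = b" "fst q \<in> X closure_of U"
      unfolding cross_def by (cases q) auto
    then have "s q \<in> Z closure_of W'"
    proof cases
      case 1
      have "s q \<in> Z closure_of ((\<lambda>y. s (a, y)) ` V)"
        using continuous_map_image_closure_subset[OF cont_a] 1 by (metis image_subset_iff prod.collapse)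
      also have "\<dots> \<subseteq> Z closure_of W'" by (intro closure_of_mono) (auto simp: V_def)
      finally show ?thesis .
    next
      case 2
      have "s q \<in> Z closure_of ((\<lambda>x. s (x, b)) ` U)"
        using continuous_map_image_closure_subset[OF cont_b] 2 by (metis image_subset_iff prod.collapse)
      also have "\<dots> \<subseteq> Z closure_of W'" by (intro closure_of_mono) (auto simp: U_def)
      finally show ?thesis .
    qed
    with cl_W' show "s q \<in> W" by blast
  qed
  have on_U: "\<forall>t\<in>N. \<forall>x\<in>U. t (x, b) \<in> W"
  proof (intro ballI)
    fix t x assume tx: "t \<in> N" "x \<in> U"
    have "(x, b) \<in> G"
      unfolding G_def cross_def using tx(2) U V openin_subset[OF U(1)] by auto
    then show "t (x, b) \<in> W" using tx(1) G_A unfolding N_def by blast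
  qed
  have on_V: "\<forall>t\<in>N. \<forall>y\<in>V. t (a, y) \<in> W"
  proof (intro ballI)
    fix t y assume ty: "t \<in> N" "y \<in> V"
    have "(a, y) \<in> G"
      unfolding G_def cross_def using ty(2) U V openin_subset[OF V(1)] by auto
    then show "t (a, y) \<in> W" using ty(1) G_A unfolding N_def by blast
  qed
  show thesis
    using that[OF U V N s_N on_U on_V] .
qed

lemma continuous_map_evaluation_fst:
  assumes "regular_space Z" "y \<in> topspace Y"
  shows "continuous_map (prod_topology X (cross_open_topology X Y Z)) Z (\<lambda>(x, s). s (x, y))"
  unfolding continuous_map_eq_topcontinuous_at topcontinuous_at_def
proof (intro ballI conjI allI impI)
  let ?T = "prod_topology X (cross_open_topology X Y Z)"
  fix p assume p: "p \<in> topspace ?T"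
  then show "p \<in> topspace ?T" .
  show "(\<lambda>(x, s). s (x, y)) \<in> topspace ?T \<rightarrow> topspace Z"
    using assms(2) SC_in_topspace by fastforce
  fix W assume W: "openin Z W \<and> (\<lambda>(x, s). s (x, y)) p \<in> W"
  obtain x s where p_eq: "p = (x, s)" and x: "x \<in> topspace X" and s: "s \<in> SC X Y Z"
    using p by auto
  have W: "openin Z W" "s (x, y) \<in> W"
    using W by (simp_all add: p_eq)
  obtain U V N where "openin X U" "x \<in> U" "openin Y V" "y \<in> V"
      "openin (cross_open_topology X Y Z) N" "s \<in> N"
      "\<forall>t\<in>N. \<forall>x'\<in>U. t (x', y) \<in> W" "\<forall>t\<in>N. \<forall>y'\<in>V. t (x, y') \<in> W"
    by (rule cross_open_neighbourhood_on_cross[OF assms(1) s x assms(2) W])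
  then show "\<exists>N'. openin ?T N' \<and> p \<in> N' \<and> (\<forall>q\<in>N'. (\<lambda>(x, s). s (x, y)) q \<in> W)"
    by (intro exI[of _ "U \<times> N"]) (auto simp: openin_prod_Times_iff p_eq)
qed

lemma continuous_map_evaluation_snd:
  assumes "regular_space Z" "x \<in> topspace X"
  shows "continuous_map (prod_topology Y (cross_open_topology X Y Z)) Z (\<lambda>(y, s). s (x, y))"
  unfolding continuous_map_eq_topcontinuous_at topcontinuous_at_def
proof (intro ballI conjI allI impI)
  let ?T = "prod_topology Y (cross_open_topology X Y Z)"
  fix p assume p: "p \<in> topspace ?T"
  then show "p \<in> topspace ?T" .
  show "(\<lambda>(y, s). s (x, y)) \<in> topspace ?T \<rightarrow> topspace Z"
    using assms(2) SC_in_topspace by fastforce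
  fix W assume W: "openin Z W \<and> (\<lambda>(y, s). s (x, y)) p \<in> W"
  obtain y s where p_eq: "p = (y, s)" and y: "y \<in> topspace Y" and s: "s \<in> SC X Y Z"
    using p by auto
  have W: "openin Z W" "s (x, y) \<in> W"
    using W by (simp_all add: p_eq)
  obtain U V N where "openin X U" "x \<in> U" "openin Y V" "y \<in> V"
      "openin (cross_open_topology X Y Z) N" "s \<in> N"
      "\<forall>t\<in>N. \<forall>x'\<in>U. t (x', y) \<in> W" "\<forall>t\<in>N. \<forall>y'\<in>V. t (x, y') \<in> W"
    by (rule cross_open_neighbourhood_on_cross[OF assms(1) s assms(2) y W])
  then show "\<exists>N'. openin ?T N' \<and> p \<in> N' \<and> (\<forall>q\<in>N'. (\<lambda>(y, s). s (x, y)) q \<in> W)"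
    by (intro exI[of _ "V \<times> N"]) (auto simp: openin_prod_Times_iff p_eq)
qed

lemma continuous_map_evaluation:
  assumes "regular_space Z" "x \<in> topspace X" "y \<in> topspace Y"
  shows "continuous_map (cross_open_topology X Y Z) Z (\<lambda>s. s (x, y))"
proof -
  have "continuous_map (cross_open_topology X Y Z) (prod_topology X (cross_open_topology X Y Z))
          (\<lambda>s. (x, s))"
    using assms(2) by (simp add: continuous_map_paired)
  from continuous_map_compose[OF this continuous_map_evaluation_fst[OF assms(1,3)]]
  show ?thesis
    by (simp add: o_def)
qed

lemma separately_continuous_evaluation:
  assumes "regular_space Z"
  shows "sep_cont3 X Y (cross_open_topology X Y Z) Z (\<lambda>x y s. s (x, y))"
    and "sep_cont2 (prod_topology X (cross_open_topology X Y Z)) Y Z (\<lambda>((x, s), y). s (x, y))"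
    and "sep_cont2 X (prod_topology Y (cross_open_topology X Y Z)) Z (\<lambda>(x, (y, s)). s (x, y))"
  using SC_continuous_map_fst SC_continuous_map_snd continuous_map_evaluation[OF assms]
    continuous_map_evaluation_fst[OF assms] continuous_map_evaluation_snd[OF assms]
  by (auto simp: sep_cont3_def sep_cont2_def case_prod_unfold)

lemma openin_topology_generated_by_finite_Inter:
  assumes "openin (topology_generated_by \<S>) M" "s \<in> M"
  obtains \<F> where "finite \<F>" "\<F> \<subseteq> \<S>" "s \<in> \<Inter>\<F>" "\<Inter>\<F> \<subseteq> M"
proof -
  have "generate_topology_on \<S> M"
    using assms(1) by (simp only: openin_topology_generated_by_iff)
  then obtain \<U> where "\<U> \<subseteq> Collect (finite' intersection_of (\<lambda>B. B \<in> \<S>))" "\<Union>\<U> = M"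
    unfolding generate_topology_on_eq union_of_def by auto
  then obtain T where "(finite' intersection_of (\<lambda>B. B \<in> \<S>)) T" "s \<in> T" "T \<subseteq> M"
    using assms(2) by blast
  then show thesis
    using that unfolding intersection_of_def by auto
qed

lemma infinite_openin_no_isolated_points:
  assumes "t1_space X" "no_isolated_points X" "openin X U" "U \<noteq> {}"
  shows "infinite U"
proof -
  obtain u where u: "u \<in> U"
    using assms(4) by blast
  have "X derived_set_of topspace X = topspace X"
    using assms(2) by (auto simp: derived_set_of_topspace no_isolated_points_def)
  then have "u \<in> X derived_set_of topspace X"
    using openin_subset[OF assms(3)] u by blast
  then have "infinite (topspace X \<inter> U)"
    using t1_space_derived_set_of_infinite_openin[THEN iffD1, OF assms(1)] assms(3) u by blast
  then show ?thesis
    using infinite_super by blast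
qed

lemma openin_obtain_point_separated_from_finite:
  assumes "completely_regular_space X" "t1_space X" "no_isolated_points X"
    and "openin X U" "U \<noteq> {}" "finite F" "F \<subseteq> topspace X"
  obtains x and f :: "'a \<Rightarrow> real"
  where "x \<in> U" "x \<notin> F" "continuous_map X euclideanreal f" "f x = 0" "\<forall>z\<in>F. f z = 1"
proof -
  have "infinite U"
    using infinite_openin_no_isolated_points assms(2-5) by blast
  then obtain x where x: "x \<in> U" "x \<notin> F"
    using assms(6) finite_subset subsetI by metis
  have "closedin X F"
    using assms(2,6,7) t1_space_closedin_finite by blast
  moreover have "x \<in> topspace X - F"
    using x openin_subset[OF assms(4)] by blast
  ultimately obtain f :: "'a \<Rightarrow> real"
    where f: "continuous_map X (top_of_set {0..1}) f" "f x = 0" "f ` F \<subseteq> {1}"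
    using assms(1) unfolding completely_regular_space_def by metis
  have "continuous_map X euclideanreal f"
    using f(1) continuous_map_in_subtopology by blast
  moreover have "\<forall>z\<in>F. f z = 1"
    using f(3) by blast
  ultimately show thesis
    using that x f(2) by blast
qed

lemma real_tvs_unit_laws:
  assumes "real_tvs Z add smul zero" "v \<in> topspace Z"
  shows "smul 0 v = zero" "smul 1 v = v" "add zero v = v" "add v zero = v"
proof -
  let ?V = "topspace Z"
  note axioms = assms(1)[unfolded real_tvs_def Let_def]
  have zero: "zero \<in> ?V" and smul_closed: "\<forall>a. \<forall>w\<in>?V. smul a w \<in> ?V"
    and add_assoc: "\<forall>u\<in>?V. \<forall>w\<in>?V. \<forall>z\<in>?V. add (add u w) z = add u (add w z)"
    and add_comm: "\<forall>u\<in>?V. \<forall>w\<in>?V. add u w = add w u"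
    and add_zero: "\<forall>w\<in>?V. add zero w = w"
    and add_inverse: "\<forall>w\<in>?V. \<exists>w'\<in>?V. add w w' = zero"
    and smul_one: "\<forall>w\<in>?V. smul 1 w = w"
    and smul_distrib: "\<forall>a b. \<forall>w\<in>?V. smul (a + b) w = add (smul a w) (smul b w)"
    using axioms by blast+
  show "add zero v = v" "smul 1 v = v"
    using assms(2) add_zero smul_one by blast+
  show "add v zero = v"
    using assms(2) zero add_comm add_zero by metis
  define u where "u = smul 0 v"
  have u: "u \<in> ?V"
    unfolding u_def using smul_closed assms(2) by blast
  have "add u u = u"
    unfolding u_def using smul_distrib assms(2) by (metis add_0)
  moreover obtain w where "w \<in> ?V" "add u w = zero"
    using add_inverse u by blast
  ultimately show "smul 0 v = zero"
    using add_assoc u zero add_comm add_zero unfolding u_def by metis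
qed

lemma continuous_map_real_tvs_segment:
  assumes "real_tvs Z add smul zero" "continuous_map T euclideanreal r" "continuous_map T Z u"
    and "c \<in> topspace Z"
  shows "continuous_map T Z (\<lambda>q. add (smul (1 - r q) (u q)) (smul (r q) c))"
proof -
  have smul: "continuous_map (prod_topology euclideanreal Z) Z (\<lambda>(a, v). smul a v)"
    and add: "continuous_map (prod_topology Z Z) Z (\<lambda>(v, w). add v w)"
    using assms(1) unfolding real_tvs_def Let_def by blast+
  have smul_cont: "continuous_map T Z (\<lambda>q. smul (a q) (v q))"
    if "continuous_map T euclideanreal a" "continuous_map T Z v" for a v
    using continuous_map_compose[OF continuous_map_pairedI[OF that] smul] by (simp add: o_def)
  have "continuous_map T Z (\<lambda>q. smul (1 - r q) (u q))"
    using assms(2,3) by (intro smul_cont continuous_map_diff) auto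
  moreover have "continuous_map T Z (\<lambda>q. smul (r q) c)"
    using assms(2,4) by (intro smul_cont) auto
  ultimately show ?thesis
    using continuous_map_compose[OF continuous_map_pairedI add] by (simp add: o_def)
qed

lemma SC_real_tvs_segment:
  assumes "real_tvs Z add smul zero" "s \<in> SC X Y Z" "sep_cont2 X Y euclideanreal h"
    and "c \<in> topspace Z"
  shows "restrict (\<lambda>q. add (smul (1 - h q) (s q)) (smul (h q) c)) (topspace X \<times> topspace Y)
           \<in> SC X Y Z"
  unfolding SC_def sep_cont2_def
proof (intro CollectI conjI ballI)
  show "restrict (\<lambda>q. add (smul (1 - h q) (s q)) (smul (h q) c)) (topspace X \<times> topspace Y)
          \<in> extensional (topspace X \<times> topspace Y)"
    by (rule restrict_extensional)
next
  fix x assume x: "x \<in> topspace X"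
  have "continuous_map Y euclideanreal (\<lambda>y. h (x, y))"
    using assms(3) x unfolding sep_cont2_def by blast
  from continuous_map_real_tvs_segment[OF assms(1) this SC_continuous_map_snd[OF assms(2) x] assms(4)]
  show "continuous_map Y Z (\<lambda>y. restrict (\<lambda>q. add (smul (1 - h q) (s q)) (smul (h q) c))
          (topspace X \<times> topspace Y) (x, y))"
    by (rule continuous_map_eq) (simp add: x)
next
  fix y assume y: "y \<in> topspace Y"
  have "continuous_map X euclideanreal (\<lambda>x. h (x, y))"
    using assms(3) y unfolding sep_cont2_def by blast
  from continuous_map_real_tvs_segment[OF assms(1) this SC_continuous_map_fst[OF assms(2) y] assms(4)]
  show "continuous_map X Z (\<lambda>x. restrict (\<lambda>q. add (smul (1 - h q) (s q)) (smul (h q) c))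
          (topspace X \<times> topspace Y) (x, y))"
    by (rule continuous_map_eq) (simp add: y)
qed

lemma cross_open_neighbourhood_finite_support:
  assumes "openin (cross_open_topology X Y Z) M" "s \<in> M"
  obtains FX FY where "finite FX" "FX \<subseteq> topspace X" "finite FY" "FY \<subseteq> topspace Y"
    "\<And>t. t \<in> SC X Y Z \<Longrightarrow>
       \<forall>q \<in> topspace X \<times> topspace Y. fst q \<in> FX \<or> snd q \<in> FY \<longrightarrow> t q = s q \<Longrightarrow> t \<in> M"
proof -
  define \<S> where "\<S> = {{s \<in> SC X Y Z. s ` A \<subseteq> W} | W A. openin Z W \<and>
    (\<exists>p \<in> topspace X \<times> topspace Y. \<exists>G.
       openin (subtopology (prod_topology X Y) (cross X Y p)) G \<and>
       A = (prod_topology X Y closure_of G) \<inter> cross X Y p)}"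
  have "openin (topology_generated_by (insert (SC X Y Z) \<S>)) M"
    using assms(1) unfolding cross_open_topology_def \<S>_def .
  then obtain \<F> where \<F>: "finite \<F>" "\<F> \<subseteq> insert (SC X Y Z) \<S>" "s \<in> \<Inter>\<F>" "\<Inter>\<F> \<subseteq> M"
    using assms(2) by (rule openin_topology_generated_by_finite_Inter)
  have "\<forall>B \<in> \<F> - {SC X Y Z}. \<exists>p. p \<in> topspace X \<times> topspace Y \<and>
          (\<exists>W A. B = {t \<in> SC X Y Z. t ` A \<subseteq> W} \<and> A \<subseteq> cross X Y p)"
  proof
    fix B assume "B \<in> \<F> - {SC X Y Z}"
    then have "B \<in> \<S>"
      using \<F>(2) by blast
    then obtain W A p G where "B = {t \<in> SC X Y Z. t ` A \<subseteq> W}" "p \<in> topspace X \<times> topspace Y"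
        "A = (prod_topology X Y closure_of G) \<inter> cross X Y p"
      unfolding \<S>_def by blast
    then show "\<exists>p. p \<in> topspace X \<times> topspace Y \<and>
                 (\<exists>W A. B = {t \<in> SC X Y Z. t ` A \<subseteq> W} \<and> A \<subseteq> cross X Y p)"
      by blast
  qed
  then obtain P where P: "\<forall>B \<in> \<F> - {SC X Y Z}. P B \<in> topspace X \<times> topspace Y \<and>
          (\<exists>W A. B = {t \<in> SC X Y Z. t ` A \<subseteq> W} \<and> A \<subseteq> cross X Y (P B))"
    by (rule bchoice[elim_format]) blast
  define FX where "FX = fst ` P ` (\<F> - {SC X Y Z})"
  define FY where "FY = snd ` P ` (\<F> - {SC X Y Z})"
  have finite: "finite FX" "finite FY"
    unfolding FX_def FY_def using \<F>(1) by simp_all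
  have subset: "FX \<subseteq> topspace X" "FY \<subseteq> topspace Y"
    unfolding FX_def FY_def using P by (auto simp: mem_Times_iff)
  have "t \<in> M"
    if t: "t \<in> SC X Y Z"
      and agree: "\<forall>q \<in> topspace X \<times> topspace Y. fst q \<in> FX \<or> snd q \<in> FY \<longrightarrow> t q = s q"
    for t
  proof -
    have "t \<in> B" if B: "B \<in> \<F>" for B
    proof (cases "B = SC X Y Z")
      case True
      then show ?thesis using t by simp
    next
      case False
      with B have "B \<in> \<F> - {SC X Y Z}"
        by blast
      then have PB: "P B \<in> topspace X \<times> topspace Y"
        and "\<exists>W A. B = {t \<in> SC X Y Z. t ` A \<subseteq> W} \<and> A \<subseteq> cross X Y (P B)"
        using P by simp_all
      then obtain W A where B_eq: "B = {t \<in> SC X Y Z. t ` A \<subseteq> W}" and A: "A \<subseteq> cross X Y (P B)"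
        by blast
      have "fst (P B) \<in> FX" "snd (P B) \<in> FY"
        unfolding FX_def FY_def using B False by simp_all
      have "t q = s q" if "q \<in> A" for q
      proof -
        have "q \<in> topspace X \<times> topspace Y" "fst q = fst (P B) \<or> snd q = snd (P B)"
          using A PB \<open>q \<in> A\<close> unfolding cross_def by auto
        then show ?thesis
          using agree \<open>fst (P B) \<in> FX\<close> \<open>snd (P B) \<in> FY\<close> by auto
      qed
      moreover have "s ` A \<subseteq> W"
        using \<F>(3) B B_eq by blast
      ultimately show ?thesis
        using t B_eq by auto
    qed
    then show ?thesis
      using \<F>(4) by blast
  qed
  with finite subset show thesis
    by (intro that)
qed

lemma cross_open_neighbourhood_attains:
  assumes X: "completely_regular_space X" "t1_space X" "no_isolated_points X"
    and Y: "completely_regular_space Y" "t1_space Y" "no_isolated_points Y"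
    and tvs: "real_tvs Z add smul zero"
    and U: "openin X U" "U \<noteq> {}" and V: "openin Y V" "V \<noteq> {}"
    and M: "openin (cross_open_topology X Y Z) M" "s \<in> M" and c: "c \<in> topspace Z"
  obtains x y t where "x \<in> U" "y \<in> V" "t \<in> M" "t (x, y) = c"
proof -
  have s: "s \<in> SC X Y Z"
    using openin_subset[OF M(1)] M(2) by auto
  obtain FX FY where FX: "finite FX" "FX \<subseteq> topspace X" and FY: "finite FY" "FY \<subseteq> topspace Y"
    and support: "\<And>t. t \<in> SC X Y Z \<Longrightarrow>
       \<forall>q \<in> topspace X \<times> topspace Y. fst q \<in> FX \<or> snd q \<in> FY \<longrightarrow> t q = s q \<Longrightarrow> t \<in> M"
    using cross_open_neighbourhood_finite_support[OF M] by blast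
  obtain x and f :: "_ \<Rightarrow> real" where x: "x \<in> U" "x \<notin> FX"
    and f: "continuous_map X euclideanreal f" "f x = 0" "\<forall>z\<in>FX. f z = 1"
    using openin_obtain_point_separated_from_finite[OF X U FX] by blast
  obtain y and g :: "_ \<Rightarrow> real" where y: "y \<in> V" "y \<notin> FY"
    and g: "continuous_map Y euclideanreal g" "g y = 0" "\<forall>z\<in>FY. g z = 1"
    using openin_obtain_point_separated_from_finite[OF Y V FY] by blast
  \<comment> \<open>h vanishes on the crosses through FX and FY and equals 1 at (x, y)\<close>
  define h where "h = (\<lambda>(x', y'). (1 - f x') * (1 - g y'))"
  define t where "t = restrict (\<lambda>q. add (smul (1 - h q) (s q)) (smul (h q) c))
                          (topspace X \<times> topspace Y)"
  have "sep_cont2 X Y euclideanreal h"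
    unfolding sep_cont2_def h_def using f(1) g(1)
    by (auto intro!: continuous_map_real_mult continuous_map_diff)
  from SC_real_tvs_segment[OF tvs s this c] have t_SC: "t \<in> SC X Y Z"
    unfolding t_def .
  have xy: "x \<in> topspace X" "y \<in> topspace Y"
    using x(1) y(1) openin_subset[OF U(1)] openin_subset[OF V(1)] by blast+
  have "t (x, y) = c"
    using xy f(2) g(2) real_tvs_unit_laws[OF tvs c] real_tvs_unit_laws[OF tvs SC_in_topspace[OF s xy]]
    by (simp add: t_def h_def)
  moreover have "t \<in> M"
  proof (rule support[OF t_SC], intro ballI impI)
    fix q assume q: "q \<in> topspace X \<times> topspace Y" "fst q \<in> FX \<or> snd q \<in> FY"
    then have "h q = 0"
      using f(3) g(3) by (auto simp: h_def split: prod.split)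
    moreover have "s q \<in> topspace Z"
      using q(1) SC_in_topspace[OF s] by (cases q) auto
    ultimately show "t q = s q"
      using q(1) real_tvs_unit_laws[OF tvs c] real_tvs_unit_laws[OF tvs] by (simp add: t_def)
  qed
  ultimately show thesis
    using that x(1) y(1) by blast
qed

lemma continuous_at_pt_compose:
  assumes "continuous_map T T' g" "continuous_at_pt T' U f (g p)" "p \<in> topspace T"
  shows "continuous_at_pt T U (f \<circ> g) p"
  unfolding continuous_at_pt_def
proof (intro conjI allI impI)
  show "p \<in> topspace T" by fact
  show "(f \<circ> g) p \<in> topspace U"
    using assms(2) unfolding continuous_at_pt_def by simp
  fix V assume V: "openin U V \<and> (f \<circ> g) p \<in> V"
  then obtain N' where N': "openin T' N'" "g p \<in> N'" "\<forall>q\<in>N'. f q \<in> V"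
    using assms(2) unfolding continuous_at_pt_def by auto
  show "\<exists>N. openin T N \<and> p \<in> N \<and> (\<forall>q\<in>N. (f \<circ> g) q \<in> V)"
    using N' assms(1,3) openin_continuous_map_preimage[OF assms(1) N'(1)]
    by (intro exI[of _ "{x \<in> topspace T. g x \<in> N'}"]) auto
qed

lemma not_continuous_at_pt_evaluation:
  assumes X: "completely_regular_space X" "t1_space X" "no_isolated_points X"
    and Y: "completely_regular_space Y" "t1_space Y" "no_isolated_points Y"
    and tvs: "real_tvs Z add smul zero" and "t1_space Z"
    and "\<exists>z1\<in>topspace Z. \<exists>z2\<in>topspace Z. z1 \<noteq> z2"
    and p: "p \<in> topspace (prod_topology X (prod_topology Y (cross_open_topology X Y Z)))"
  shows "\<not> continuous_at_pt (prod_topology X (prod_topology Y (cross_open_topology X Y Z))) Z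
           (\<lambda>(x, y, s). s (x, y)) p"
proof
  let ?S = "cross_open_topology X Y Z"
  assume cont: "continuous_at_pt (prod_topology X (prod_topology Y ?S)) Z (\<lambda>(x, y, s). s (x, y)) p"
  obtain x0 y0 s0 where p_eq: "p = (x0, y0, s0)"
    by (cases p) blast
  have s0: "s0 \<in> SC X Y Z" and z0: "s0 (x0, y0) \<in> topspace Z"
    using p SC_in_topspace by (auto simp: p_eq)
  obtain c where c: "c \<in> topspace Z" "c \<noteq> s0 (x0, y0)"
    using assms(9) by metis
  have "openin Z (topspace Z - {c})"
    using openin_diff[OF openin_topspace closedin_t1_singleton[OF assms(8) c(1)]] .
  moreover have "(\<lambda>(x, y, s). s (x, y)) p \<in> topspace Z - {c}"
    using z0 c(2) by (simp add: p_eq)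
  ultimately have "\<exists>N. openin (prod_topology X (prod_topology Y ?S)) N \<and> p \<in> N \<and>
                     (\<forall>q\<in>N. (\<lambda>(x, y, s). s (x, y)) q \<in> topspace Z - {c})"
    using cont[unfolded continuous_at_pt_def, THEN conjunct2, THEN conjunct2, rule_format] by blast
  then obtain N where N: "openin (prod_topology X (prod_topology Y ?S)) N" "(x0, y0, s0) \<in> N"
      "\<forall>q\<in>N. (\<lambda>(x, y, s). s (x, y)) q \<in> topspace Z - {c}"
    unfolding p_eq by blast
  obtain U R where U: "openin X U" "x0 \<in> U" and R: "openin (prod_topology Y ?S) R" "(y0, s0) \<in> R"
      and UR: "U \<times> R \<subseteq> N"
    using openin_prod_topology_alt[THEN iffD1, OF N(1), rule_format, OF N(2)] by blast
  obtain V M where V: "openin Y V" "y0 \<in> V" and M: "openin ?S M" "s0 \<in> M" and VM: "V \<times> M \<subseteq> R"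
    using openin_prod_topology_alt[THEN iffD1, OF R(1), rule_format, OF R(2)] by blast
  have "U \<noteq> {}" "V \<noteq> {}"
    using U(2) V(2) by blast+
  then obtain x y t where "x \<in> U" "y \<in> V" "t \<in> M" and t_c: "t (x, y) = c"
    using cross_open_neighbourhood_attains[OF X Y tvs U(1) _ V(1) _ M c(1)] by blast
  with UR VM have "(x, y, t) \<in> N"
    by blast
  with N(3) have "(\<lambda>(x, y, s). s (x, y)) (x, y, t) \<in> topspace Z - {c}"
    by blast
  with t_c show False
    by simp
qed

lemma not_continuous_at_pt_evaluation_fst:
  assumes "completely_regular_space X" "t1_space X" "no_isolated_points X"
    and "completely_regular_space Y" "t1_space Y" "no_isolated_points Y"
    and "real_tvs Z add smul zero" "t1_space Z"
    and "\<exists>z1\<in>topspace Z. \<exists>z2\<in>topspace Z. z1 \<noteq> z2"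
    and p: "p \<in> topspace (prod_topology (prod_topology X (cross_open_topology X Y Z)) Y)"
  shows "\<not> continuous_at_pt (prod_topology (prod_topology X (cross_open_topology X Y Z)) Y) Z
           (\<lambda>((x, s), y). s (x, y)) p"
proof
  let ?S = "cross_open_topology X Y Z"
  let ?rearrange = "\<lambda>q. ((fst q, snd (snd q)), fst (snd q))"
  obtain x y s where p_eq: "p = ((x, s), y)"
    by (metis prod.collapse)
  assume "continuous_at_pt (prod_topology (prod_topology X ?S) Y) Z (\<lambda>((x, s), y). s (x, y)) p"
  then have "continuous_at_pt (prod_topology (prod_topology X ?S) Y) Z (\<lambda>((x, s), y). s (x, y))
               (?rearrange (x, y, s))"
    by (simp add: p_eq)
  moreover have "continuous_map (prod_topology X (prod_topology Y ?S))
                   (prod_topology (prod_topology X ?S) Y) ?rearrange"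
    by (intro continuous_map_pairedI continuous_map_fst
        continuous_map_compose[OF continuous_map_snd continuous_map_snd, unfolded o_def]
        continuous_map_compose[OF continuous_map_snd continuous_map_fst, unfolded o_def])
  moreover have xys: "(x, y, s) \<in> topspace (prod_topology X (prod_topology Y ?S))"
    using p by (simp add: p_eq)
  ultimately have "continuous_at_pt (prod_topology X (prod_topology Y ?S)) Z
                     ((\<lambda>((x, s), y). s (x, y)) \<circ> ?rearrange) (x, y, s)"
    by (intro continuous_at_pt_compose)
  moreover have "(\<lambda>((x, s), y). s (x, y)) \<circ> ?rearrange = (\<lambda>(x, y, s). s (x, y))"
    by (simp add: fun_eq_iff case_prod_unfold)
  ultimately show False
    using not_continuous_at_pt_evaluation[OF assms(1-9) xys] by metis
qed

theorem proposition3p1: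
  fixes X :: "'a topology" and Y :: "'b topology" and Z :: "'c topology"
  assumes "regular_space Z"
  shows
    "sep_cont3 X Y (cross_open_topology X Y Z) Z (\<lambda>x y s. s (x, y))
     \<and> sep_cont2 (prod_topology X (cross_open_topology X Y Z)) Y Z (\<lambda>((x, s), y). s (x, y))
     \<and> sep_cont2 X (prod_topology Y (cross_open_topology X Y Z)) Z (\<lambda>(x, (y, s)). s (x, y))
     \<and> ((completely_regular_space X \<and> t1_space X \<and> no_isolated_points X \<and>
          completely_regular_space Y \<and> t1_space Y \<and> no_isolated_points Y \<and>
          Hausdorff_space Z \<and> (\<exists>add smul zero. real_tvs Z add smul zero) \<and>
          (\<exists>z1\<in>topspace Z. \<exists>z2\<in>topspace Z. z1 \<noteq> z2))
        \<longrightarrow>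
          (\<forall>p \<in> topspace (prod_topology X (prod_topology Y (cross_open_topology X Y Z))).
              \<not> continuous_at_pt (prod_topology X (prod_topology Y (cross_open_topology X Y Z))) Z
                  (\<lambda>(x, y, s). s (x, y)) p)
        \<and> (\<forall>p \<in> topspace (prod_topology (prod_topology X (cross_open_topology X Y Z)) Y).
              \<not> continuous_at_pt (prod_topology (prod_topology X (cross_open_topology X Y Z)) Y) Z
                  (\<lambda>((x, s), y). s (x, y)) p)
        \<and> (\<forall>p \<in> topspace (prod_topology X (prod_topology Y (cross_open_topology X Y Z))).
              \<not> continuous_at_pt (prod_topology X (prod_topology Y (cross_open_topology X Y Z))) Z
                  (\<lambda>(x, (y, s)). s (x, y)) p))"
  \<comment> \<open>\<open>\<lambda>(x, (y, s)). s (x, y)\<close> and \<open>\<lambda>(x, y, s). s (x, y)\<close> are the same term: e2 is e\<close>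
  using separately_continuous_evaluation[OF assms] Hausdorff_imp_t1_space
    not_continuous_at_pt_evaluation[of X Y Z] not_continuous_at_pt_evaluation_fst[of X Y Z]
  by blast

end
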